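(* Let $n\ge1$ and $\gamma\in PSL(n+1,\mathbb{C})$. Then $\gamma$ is elliptic if and only if there exists $h\in PSL(n+1,\mathbb{C})$ such that $h^{-1}\gamma h(T(r))=T(r)$ for every $r>0$, where $T(r)=\{[z_1:\dots:z_{n+1}]\in\mathbb{P}^n_{\mathbb{C}}:\ \sum_{j=1}^n|z_j|^2=r|z_{n+1}|^2\}$ (these $T(r)$, $r>0$, form a foliation of $\mathbb{C}^n\setminus\{0\}=\mathbb{P}^n_{\mathbb{C}}\setminus(\{z_{n+1}=0\}\cup\{[e_{n+1}]\})$ by concentric spheres).
   Context: $\gamma\in PSL(n+1,\mathbb{C})=GL(n+1,\mathbb{C})/\mathbb{C}^*$ is called elliptic if every lift $\widetilde\gamma\in SL(n+1,\mathbb{C})$ of $\gamma$ is diagonalizable and all its eigenvalues have modulus $1$. *)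

theory Defs
  imports Complex_Main "Jordan_Normal_Form.Matrix" "Jordan_Normal_Form.Determinant" "Jordan_Normal_Form.Char_Poly"
begin

(* An element of PSL(n+1,C) = GL(n+1,C)/C^* is represented by any invertible
   (n+1)x(n+1) complex matrix G (a lift).  Coordinates z_1..z_{n+1} are indices 0..n. *)

definition diagonalizable_mat :: "complex mat \<Rightarrow> bool" where
  "diagonalizable_mat L \<longleftrightarrow> (\<exists>D. similar_mat L D \<and> diagonal_mat D)"

definition SL_lift :: "nat \<Rightarrow> complex mat \<Rightarrow> complex mat \<Rightarrow> bool" where
  "SL_lift n G L \<longleftrightarrow> L \<in> carrier_mat (n+1) (n+1) \<and> det L = 1 \<and> (\<exists>c. c \<noteq> 0 \<and> L = c \<cdot>\<^sub>m G)"

definition elliptic :: "nat \<Rightarrow> complex mat \<Rightarrow> bool" where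
  "elliptic n G \<longleftrightarrow> (\<forall>L. SL_lift n G L \<longrightarrow>
      diagonalizable_mat L \<and> (\<forall>k. eigenvalue L k \<longrightarrow> cmod k = 1))"

definition proj_point :: "complex vec \<Rightarrow> complex vec set" where
  "proj_point z = {c \<cdot>\<^sub>v z | c. c \<noteq> 0}"

definition Tsphere :: "nat \<Rightarrow> real \<Rightarrow> complex vec set set" where
  "Tsphere n r = {proj_point z | z. z \<in> carrier_vec (n+1) \<and> z \<noteq> 0\<^sub>v (n+1) \<and>
       (\<Sum>j<n. (cmod (z $ j))\<^sup>2) = r * (cmod (z $ n))\<^sup>2}"

definition proj_image :: "complex mat \<Rightarrow> complex vec set set \<Rightarrow> complex vec set set" where
  "proj_image A S = {proj_point (A *\<^sub>v z) | z. z \<in> carrier_vec (dim_col A) \<and>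
       z \<noteq> 0\<^sub>v (dim_col A) \<and> proj_point z \<in> S}"

end

theory Submission
  imports Defs "Jordan_Normal_Form.Jordan_Normal_Form_Uniqueness"
    "Jordan_Normal_Form.Jordan_Normal_Form_Existence"
begin

text \<open>After conjugation by \<open>H\<close> the condition says that \<open>M = H\<^sup>-\<^sup>1 G H\<close> preserves every
  \<open>T(r)\<close>. If \<open>G\<close> is elliptic, a lift of \<open>G\<close> is conjugate to a diagonal matrix with unimodular
  entries, and a diagonal matrix whose entries have a common modulus multiplies
  \<open>|z\<^sub>1|\<^sup>2 + \<dots> + |z\<^sub>n|\<^sup>2\<close> and \<open>|z\<^sub>n\<^sub>+\<^sub>1|\<^sup>2\<close> by the same factor, so it preserves each \<open>T(r)\<close>.
  Conversely, evaluating the invariance at the points \<open>t e\<^sub>k + e\<^sub>n\<^sub>+\<^sub>1\<close> and comparing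
  coefficients in \<open>t\<close> shows that \<open>M\<close> is block diagonal with \<open>|M z|\<^sup>2 = |M\<^sub>n\<^sub>+\<^sub>1\<^sub>,\<^sub>n\<^sub>+\<^sub>1|\<^sup>2 |z|\<^sup>2\<close>,
  a scaled isometry. A scaled isometry has no Jordan chains of length two, hence is
  diagonalizable, and all its eigenvalues have the same modulus, which the determinant of a
  lift to \<open>SL(n+1,\<complex>)\<close> forces to be \<open>1\<close>.\<close>

section \<open>Squared norms and the spheres \<open>T(r)\<close>\<close>

definition sum_sq_norm :: "nat \<Rightarrow> complex vec \<Rightarrow> real" where
  "sum_sq_norm m v = (\<Sum>j<m. (cmod (v $ j))\<^sup>2)"

lemma sum_sq_norm_Suc: "sum_sq_norm (Suc m) v = sum_sq_norm m v + (cmod (v $ m))\<^sup>2"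
  unfolding sum_sq_norm_def by simp

lemma sum_sq_norm_nonneg: "sum_sq_norm m v \<ge> 0"
  unfolding sum_sq_norm_def by (intro sum_nonneg) simp

lemma sum_sq_norm_eq_0_iff: "sum_sq_norm m v = 0 \<longleftrightarrow> (\<forall>j<m. v $ j = 0)"
  unfolding sum_sq_norm_def by (subst sum_nonneg_eq_0_iff) auto

lemma sum_sq_norm_eq_0_iff_zero_vec:
  "v \<in> carrier_vec m \<Longrightarrow> sum_sq_norm m v = 0 \<longleftrightarrow> v = 0\<^sub>v m"
  unfolding sum_sq_norm_eq_0_iff by auto

lemma sum_sq_norm_proportional:
  assumes "\<And>j. j < m \<Longrightarrow> cmod (u $ j) = b * cmod (v $ j)"
  shows "sum_sq_norm m u = b\<^sup>2 * sum_sq_norm m v"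
  unfolding sum_sq_norm_def sum_distrib_left using assms by (intro sum.cong) (auto simp: power_mult_distrib)

lemma sum_sq_norm_smult:
  "m \<le> dim_vec v \<Longrightarrow> sum_sq_norm m (c \<cdot>\<^sub>v v) = (cmod c)\<^sup>2 * sum_sq_norm m v"
  by (rule sum_sq_norm_proportional) (simp add: norm_mult)

lemma proj_point_mem_Tsphere_iff:
  assumes w: "w \<in> carrier_vec (n+1)"
  shows "proj_point w \<in> Tsphere n r \<longleftrightarrow>
    w \<noteq> 0\<^sub>v (n+1) \<and> sum_sq_norm n w = r * (cmod (w $ n))\<^sup>2"
proof
  assume "proj_point w \<in> Tsphere n r"
  then obtain z where z: "proj_point w = proj_point z" "z \<in> carrier_vec (n+1)" "z \<noteq> 0\<^sub>v (n+1)"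
      "sum_sq_norm n z = r * (cmod (z $ n))\<^sup>2"
    unfolding Tsphere_def sum_sq_norm_def by auto
  have "w \<in> proj_point w"
    unfolding proj_point_def by (auto intro: exI[of _ 1])
  then have "w \<in> proj_point z"
    using z(1) by simp
  then obtain c where c: "c \<noteq> 0" "w = c \<cdot>\<^sub>v z"
    unfolding proj_point_def by auto
  have "sum_sq_norm (n+1) w \<noteq> 0"
    using z(2,3) c by (simp add: sum_sq_norm_smult sum_sq_norm_eq_0_iff_zero_vec)
  then have "w \<noteq> 0\<^sub>v (n+1)"
    using sum_sq_norm_eq_0_iff_zero_vec[OF w] by blast
  moreover have "sum_sq_norm n w = r * (cmod (w $ n))\<^sup>2"
    using z(2,4) c by (simp add: sum_sq_norm_smult norm_mult power_mult_distrib)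
  ultimately show "w \<noteq> 0\<^sub>v (n+1) \<and> sum_sq_norm n w = r * (cmod (w $ n))\<^sup>2" ..
qed (use w in \<open>auto simp: Tsphere_def sum_sq_norm_def\<close>)

lemma proj_image_Tsphere_eqI:
  assumes M: "M \<in> carrier_mat (n+1) (n+1)" and s: "s > 0"
    and head: "\<And>w. w \<in> carrier_vec (n+1) \<Longrightarrow> sum_sq_norm n (M *\<^sub>v w) = s * sum_sq_norm n w"
    and last: "\<And>w. w \<in> carrier_vec (n+1) \<Longrightarrow> (cmod ((M *\<^sub>v w) $ n))\<^sup>2 = s * (cmod (w $ n))\<^sup>2"
    and onto: "\<And>y. y \<in> carrier_vec (n+1) \<Longrightarrow> \<exists>z \<in> carrier_vec (n+1). M *\<^sub>v z = y"
  shows "proj_image M (Tsphere n r) = Tsphere n r"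
proof -
  have mem_iff: "proj_point (M *\<^sub>v w) \<in> Tsphere n r \<longleftrightarrow> proj_point w \<in> Tsphere n r"
    if w: "w \<in> carrier_vec (n+1)" for w
  proof -
    have "sum_sq_norm (n+1) (M *\<^sub>v w) = s * sum_sq_norm (n+1) w"
      using head[OF w] last[OF w] by (simp add: sum_sq_norm_Suc algebra_simps)
    then have "M *\<^sub>v w = 0\<^sub>v (n+1) \<longleftrightarrow> w = 0\<^sub>v (n+1)"
      using M w s by (simp flip: sum_sq_norm_eq_0_iff_zero_vec)
    then show ?thesis
      using M w s head[OF w] last[OF w] by (simp add: proj_point_mem_Tsphere_iff)
  qed
  show ?thesis
  proof
    show "proj_image M (Tsphere n r) \<subseteq> Tsphere n r"
      using M mem_iff unfolding proj_image_def by auto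
    show "Tsphere n r \<subseteq> proj_image M (Tsphere n r)"
    proof
      fix p assume "p \<in> Tsphere n r"
      then obtain y where y: "p = proj_point y" "y \<in> carrier_vec (n+1)" "proj_point y \<in> Tsphere n r"
        unfolding Tsphere_def by auto
      obtain z where z: "z \<in> carrier_vec (n+1)" "M *\<^sub>v z = y"
        using onto[OF y(2)] by blast
      have "proj_point z \<in> Tsphere n r"
        using mem_iff[OF z(1)] z(2) y(3) by simp
      then show "p \<in> proj_image M (Tsphere n r)"
        using M y(1) z proj_point_mem_Tsphere_iff[OF z(1)] unfolding proj_image_def by auto
    qed
  qed
qed

lemma index_mult_mat_vec_sum:
  assumes "M \<in> carrier_mat nr nc" "w \<in> carrier_vec nc" "i < nr"
  shows "(M *\<^sub>v w) $ i = (\<Sum>j<nc. M $$ (i,j) * w $ j)"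
  using assms by (simp add: mult_mat_vec_def scalar_prod_def lessThan_atLeast0)

lemma index_mult_diagonal_mat_vec:
  assumes D: "D \<in> carrier_mat m m" "diagonal_mat D" and z: "z \<in> carrier_vec m" and i: "i < m"
  shows "(D *\<^sub>v z) $ i = D $$ (i,i) * z $ i"
proof -
  have "(D *\<^sub>v z) $ i = (\<Sum>j<m. if j = i then D $$ (i,i) * z $ i else 0)"
    unfolding index_mult_mat_vec_sum[OF D(1) z i]
    using D i unfolding diagonal_mat_def by (intro sum.cong) auto
  with i show ?thesis by simp
qed

lemma proj_image_diagonal_Tsphere:
  assumes K: "K \<in> carrier_mat (n+1) (n+1)" "diagonal_mat K" and b: "b > 0"
    and diag: "\<And>i. i < n+1 \<Longrightarrow> cmod (K $$ (i,i)) = b"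
  shows "proj_image K (Tsphere n r) = Tsphere n r"
proof (rule proj_image_Tsphere_eqI[OF K(1)])
  have cmod_K: "cmod ((K *\<^sub>v w) $ i) = b * cmod (w $ i)" if "w \<in> carrier_vec (n+1)" "i < n+1" for w i
    using index_mult_diagonal_mat_vec[OF K that] diag[OF that(2)] by (simp add: norm_mult)
  show "sum_sq_norm n (K *\<^sub>v w) = b\<^sup>2 * sum_sq_norm n w" if "w \<in> carrier_vec (n+1)" for w
    using cmod_K[OF that] by (intro sum_sq_norm_proportional) simp
  show "(cmod ((K *\<^sub>v w) $ n))\<^sup>2 = b\<^sup>2 * (cmod (w $ n))\<^sup>2" if "w \<in> carrier_vec (n+1)" for w
    using cmod_K[OF that] by (simp add: power_mult_distrib)
  show "\<exists>z \<in> carrier_vec (n+1). K *\<^sub>v z = y" if y: "y \<in> carrier_vec (n+1)" for y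
  proof
    let ?z = "vec (n+1) (\<lambda>i. y $ i / K $$ (i,i))"
    show "?z \<in> carrier_vec (n+1)" by simp
    have "(K *\<^sub>v ?z) $ i = y $ i" if i: "i < n+1" for i
      using index_mult_diagonal_mat_vec[OF K _ i, of ?z] diag[OF i] b i by auto
    then show "K *\<^sub>v ?z = y"
      using K(1) y by (intro eq_vecI) auto
  qed
qed (use b in simp)

section \<open>Elliptic elements preserve the spheres\<close>

lemma eigenvalue_similar:
  assumes "similar_mat A (B :: 'a :: field mat)"
  shows "eigenvalue A k \<longleftrightarrow> eigenvalue B k"
proof -
  obtain m where "A \<in> carrier_mat m m" "B \<in> carrier_mat m m"
    using similar_matD[OF assms] by auto
  then show ?thesis
    using char_poly_similar[OF assms] by (simp add: eigenvalue_root_char_poly)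
qed

lemma eigenvalue_diagonal_mat:
  assumes D: "D \<in> carrier_mat m m" "diagonal_mat (D :: 'a :: field mat)"
  shows "eigenvalue D k \<longleftrightarrow> k \<in> set (diag_mat D)"
proof -
  have "upper_triangular D"
    using D unfolding upper_triangular_def diagonal_mat_def by auto
  then show ?thesis
    by (simp add: eigenvalue_root_char_poly[OF D(1)] char_poly_upper_triangular[OF D(1)]
        poly_prod_list prod_list_zero_iff image_iff)
qed

lemma mult_conj_cancel:
  assumes "P \<in> carrier_mat m m" "Q \<in> carrier_mat m m" "X \<in> carrier_mat m m" "P * Q = 1\<^sub>m m"
  shows "P * (Q * X * P) * Q = (X :: 'a :: semiring_1 mat)"
proof -
  have "P * (Q * X * P) * Q = (P * Q) * X * (P * Q)"
    using assms(1-3) by (simp add: assoc_mult_mat[of _ m m _ m _ m])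
  also have "\<dots> = X"
    unfolding assms(4) using assms(3) by simp
  finally show ?thesis .
qed

lemma complex_nth_root_exists:
  assumes "k > 0"
  shows "\<exists>c::complex. c ^ k = z"
proof -
  have "rcis (root k (cmod z)) (Arg z / k) ^ k = rcis (cmod z) (Arg z)"
    using assms by (simp add: DeMoivre2 real_root_pow_pos2)
  then show ?thesis
    using rcis_cmod_Arg by metis
qed

lemma SL_lift_exists:
  assumes G: "G \<in> carrier_mat (n+1) (n+1)" and "det G \<noteq> 0"
  shows "\<exists>L. SL_lift n G L"
proof -
  obtain c where c: "c ^ (n+1) = inverse (det G)"
    using complex_nth_root_exists[of "n+1"] by auto
  then have "c \<noteq> 0" "det (c \<cdot>\<^sub>m G) = 1"
    using G \<open>det G \<noteq> 0\<close> by auto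
  then show ?thesis
    using G unfolding SL_lift_def by (auto intro!: exI[of _ "c \<cdot>\<^sub>m G"])
qed

lemma elliptic_imp_conj_preserves_Tsphere:
  assumes G: "G \<in> carrier_mat (n+1) (n+1)" and "det G \<noteq> 0" and "elliptic n G"
  shows "\<exists>H Hi. H \<in> carrier_mat (n+1) (n+1) \<and> Hi \<in> carrier_mat (n+1) (n+1) \<and>
    H * Hi = 1\<^sub>m (n+1) \<and> Hi * H = 1\<^sub>m (n+1) \<and>
    (\<forall>r. proj_image (Hi * G * H) (Tsphere n r) = Tsphere n r)"
proof -
  obtain L c where L: "L \<in> carrier_mat (n+1) (n+1)" "c \<noteq> 0" "L = c \<cdot>\<^sub>m G"
    and ell: "diagonalizable_mat L" "\<And>k. eigenvalue L k \<Longrightarrow> cmod k = 1"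
    using SL_lift_exists[OF G \<open>det G \<noteq> 0\<close>] \<open>elliptic n G\<close>
    unfolding elliptic_def SL_lift_def by blast
  then obtain D P Q where D: "diagonal_mat D" "similar_mat_wit L D P Q"
    unfolding diagonalizable_mat_def similar_mat_def by auto
  then have P: "P \<in> carrier_mat (n+1) (n+1)" and Q: "Q \<in> carrier_mat (n+1) (n+1)"
    and Dc: "D \<in> carrier_mat (n+1) (n+1)"
    and PQ: "P * Q = 1\<^sub>m (n+1)" and QP: "Q * P = 1\<^sub>m (n+1)" and LD: "L = P * D * Q"
    using similar_mat_witD[OF _ D(2), of "n+1"] L(1) by auto
  define K where "K = inverse c \<cdot>\<^sub>m D"
  have "G = inverse c \<cdot>\<^sub>m L"
    using G L(2,3) by (intro eq_matI) auto
  then have "Q * G * P = inverse c \<cdot>\<^sub>m (Q * L * P)"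
    using L(1) P Q by (simp add: mult_smult_distrib[of _ "n+1" "n+1"]
        mult_smult_assoc_mat[of _ "n+1" "n+1"])
  also have "Q * L * P = D"
    unfolding LD by (rule mult_conj_cancel[OF Q P Dc QP])
  finally have QGP: "Q * G * P = K"
    unfolding K_def .
  have "D $$ (i,i) \<in> set (diag_mat D)" if "i < n+1" for i
    using Dc that by (auto simp: diag_mat_def simp del: upt_Suc)
  then have "eigenvalue L (D $$ (i,i))" if "i < n+1" for i
    using eigenvalue_diagonal_mat[OF Dc D(1)] eigenvalue_similar[of L D] D(2) that
    unfolding similar_mat_def by blast
  then have "cmod (K $$ (i,i)) = inverse (cmod c)" if "i < n+1" for i
    using ell(2) Dc that by (simp add: K_def norm_mult norm_inverse)
  then have "proj_image K (Tsphere n r) = Tsphere n r" for r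
    using Dc D(1) L(2) by (intro proj_image_diagonal_Tsphere) (auto simp: K_def diagonal_mat_def)
  then show ?thesis
    using P Q PQ QP QGP by blast
qed

section \<open>Scaled isometries\<close>

definition scaled_isometry :: "nat \<Rightarrow> real \<Rightarrow> complex mat \<Rightarrow> bool" where
  "scaled_isometry m s K \<longleftrightarrow> K \<in> carrier_mat m m \<and>
     (\<forall>w \<in> carrier_vec m. sum_sq_norm m (K *\<^sub>v w) = s * sum_sq_norm m w)"

lemma scaled_isometry_smult:
  assumes "scaled_isometry m s K"
  shows "scaled_isometry m ((cmod c)\<^sup>2 * s) (c \<cdot>\<^sub>m K)"
proof -
  have "(c \<cdot>\<^sub>m K) *\<^sub>v w = c \<cdot>\<^sub>v (K *\<^sub>v w)" if "w \<in> carrier_vec m" for w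
    using assms that unfolding scaled_isometry_def by (intro eq_vecI) auto
  then show ?thesis
    using assms unfolding scaled_isometry_def by (auto simp: sum_sq_norm_smult)
qed

lemma scaled_isometry_eigenvalue:
  assumes iso: "scaled_isometry m s K" and "eigenvalue K k"
  shows "(cmod k)\<^sup>2 = s"
proof -
  obtain v where v: "v \<in> carrier_vec m" "v \<noteq> 0\<^sub>v m" "K *\<^sub>v v = k \<cdot>\<^sub>v v"
    using assms unfolding scaled_isometry_def eigenvalue_def eigenvector_def by auto
  have "(cmod k)\<^sup>2 * sum_sq_norm m v = s * sum_sq_norm m v"
    using iso v(1) by (simp add: scaled_isometry_def flip: v(3) sum_sq_norm_smult)
  moreover have "sum_sq_norm m v \<noteq> 0"
    using v(1,2) sum_sq_norm_eq_0_iff_zero_vec by blast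
  ultimately show ?thesis
    by simp
qed

lemma index_char_matrix_mult_vec:
  assumes "K \<in> carrier_mat m m" "x \<in> carrier_vec m" "j < m"
  shows "(char_matrix K e *\<^sub>v x) $ j = (K *\<^sub>v x) $ j - e * x $ j"
proof -
  have "char_matrix K e *\<^sub>v x = K *\<^sub>v x + ((-e) \<cdot>\<^sub>m 1\<^sub>m m) *\<^sub>v x"
    unfolding char_matrix_def using assms by (simp add: add_mult_distrib_mat_vec[of _ m m])
  then show ?thesis
    using assms by simp
qed

lemma cmod_second_difference:
  fixes u y :: complex
  shows "(cmod u)\<^sup>2 - 2 * (cmod (u + y))\<^sup>2 + (cmod (u + 2 * y))\<^sup>2 = 2 * (cmod y)\<^sup>2"
  unfolding cmod_power2 by (simp add: algebra_simps power2_eq_square)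

text \<open>If \<open>K y = e y\<close> and \<open>K x = e x + y\<close>, then \<open>|K (x + c y)|\<^sup>2 = |e (x + c y)|\<^sup>2\<close> says
  \<open>f (1 + c e) = f (c e)\<close> for \<open>f t = |e x + t y|\<^sup>2\<close>; taking \<open>c = 0\<close> and \<open>c = 1/e\<close> makes the
  second difference \<open>f 0 - 2 f 1 + f 2 = 2 |y|\<^sup>2\<close> vanish.\<close>
lemma scaled_isometry_no_Jordan_chain:
  assumes iso: "scaled_isometry m s K" and s: "s > 0"
    and x: "x \<in> carrier_vec m" and y: "y \<in> carrier_vec m"
    and Kx: "K *\<^sub>v x = e \<cdot>\<^sub>v x + y" and Ky: "K *\<^sub>v y = e \<cdot>\<^sub>v y"
  shows "y = 0\<^sub>v m"
proof (rule ccontr)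
  assume "y \<noteq> 0\<^sub>v m"
  with iso y Ky have "eigenvalue K e"
    unfolding scaled_isometry_def eigenvalue_def eigenvector_def by auto
  then have e: "(cmod e)\<^sup>2 = s"
    by (rule scaled_isometry_eigenvalue[OF iso])
  define f where "f t = (\<Sum>j<m. (cmod (e * x $ j + t * y $ j))\<^sup>2)" for t
  have shift: "f (1 + c * e) = f (c * e)" for c
  proof -
    have K: "K \<in> carrier_mat m m"
      using iso by (simp add: scaled_isometry_def)
    have "K *\<^sub>v (x + c \<cdot>\<^sub>v y) = K *\<^sub>v x + c \<cdot>\<^sub>v (K *\<^sub>v y)"
      using K x y by (simp add: mult_add_distrib_mat_vec[of _ m m] mult_mat_vec[of _ m m])
    then have "f (1 + c * e) = sum_sq_norm m (K *\<^sub>v (x + c \<cdot>\<^sub>v y))"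
      unfolding f_def sum_sq_norm_def using x y by (intro sum.cong) (auto simp: Kx Ky algebra_simps)
    also have "\<dots> = sum_sq_norm m (e \<cdot>\<^sub>v (x + c \<cdot>\<^sub>v y))"
      using iso x y e by (simp add: scaled_isometry_def sum_sq_norm_smult)
    also have "\<dots> = f (c * e)"
      unfolding f_def sum_sq_norm_def using x y by (intro sum.cong) (auto simp: algebra_simps)
    finally show ?thesis .
  qed
  have "e \<noteq> 0"
    using e s by auto
  then have "f 0 - 2 * f 1 + f 2 = 0"
    using shift[of 0] shift[of "1/e"] by (simp add: one_add_one)
  moreover have "f 0 - 2 * f 1 + f 2 = 2 * sum_sq_norm m y"
    unfolding f_def sum_sq_norm_def sum_distrib_left sum_subtractf[symmetric] sum.distrib[symmetric]
    using cmod_second_difference by simp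
  ultimately have "sum_sq_norm m y = 0"
    by simp
  with y \<open>y \<noteq> 0\<^sub>v m\<close> show False
    by (simp add: sum_sq_norm_eq_0_iff_zero_vec)
qed

lemma scaled_isometry_char_matrix_kernel:
  assumes iso: "scaled_isometry m s K" and s: "s > 0" and x: "x \<in> carrier_vec m"
    and CCx: "char_matrix K e *\<^sub>v (char_matrix K e *\<^sub>v x) = 0\<^sub>v m"
  shows "char_matrix K e *\<^sub>v x = 0\<^sub>v m"
proof -
  define y where "y = char_matrix K e *\<^sub>v x"
  have K: "K \<in> carrier_mat m m"
    using iso by (simp add: scaled_isometry_def)
  have y: "y \<in> carrier_vec m"
    unfolding y_def by (rule mult_mat_vec_carrier[OF char_matrix_closed[OF K] x])
  have Cy: "char_matrix K e *\<^sub>v y = 0\<^sub>v m"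
    using CCx unfolding y_def .
  have "(K *\<^sub>v x) $ j = e * x $ j + y $ j" if "j < m" for j
    using index_char_matrix_mult_vec[OF K x that, of e] y_def by simp
  then have Kx: "K *\<^sub>v x = e \<cdot>\<^sub>v x + y"
    using K x y by (intro eq_vecI) auto
  have "(K *\<^sub>v y) $ j = e * y $ j" if "j < m" for j
    using index_char_matrix_mult_vec[OF K y that, of e] Cy that by simp
  then have Ky: "K *\<^sub>v y = e \<cdot>\<^sub>v y"
    using K y by (intro eq_vecI) auto
  show ?thesis
    using scaled_isometry_no_Jordan_chain[OF iso s x y Kx Ky] by (simp add: y_def)
qed

lemma sum_list_min_2_eq_min_1:
  fixes xs :: "nat list"
  assumes "sum_list (map (min 2) xs) = sum_list (map (min 1) xs)" and "x \<in> set xs"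
  shows "x \<le> 1"
  using assms
proof (induction xs)
  case (Cons a xs)
  have "sum_list (map (min 1) xs) \<le> sum_list (map (min 2) xs)"
    by (intro sum_list_mono) simp
  with Cons.prems(1) have "a \<le> 1" "sum_list (map (min 2) xs) = sum_list (map (min 1) xs)"
    by auto
  with Cons show ?case
    by auto
qed simp

text \<open>Since \<open>ker (K - e)\<^sup>2 = ker (K - e)\<close>, the dimension formula for generalized eigenspaces
  leaves no room for Jordan blocks of size two or more.\<close>
lemma scaled_isometry_diagonalizable:
  assumes iso: "scaled_isometry m s K" and s: "s > 0"
  shows "diagonalizable_mat K"
proof -
  have K: "K \<in> carrier_mat m m"
    using iso by (simp add: scaled_isometry_def)
  obtain n_as where jnf: "jordan_nf K n_as"
    using char_poly_factorized[OF K] jordan_nf_exists[OF K] by metis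
  have "mat_kernel (char_matrix K e ^\<^sub>m 2) = mat_kernel (char_matrix K e ^\<^sub>m 1)" for e
  proof -
    let ?C = "char_matrix K e"
    have C: "?C \<in> carrier_mat m m"
      using K by simp
    have "?C *\<^sub>v (?C *\<^sub>v v) = 0\<^sub>v m \<longleftrightarrow> ?C *\<^sub>v v = 0\<^sub>v m" if "v \<in> carrier_vec m" for v
      using scaled_isometry_char_matrix_kernel[OF iso s that] C that by auto
    then show ?thesis
      using C by (auto simp: mat_kernel_def numeral_2_eq_2)
  qed
  then have "dim_gen_eigenspace K e 2 = dim_gen_eigenspace K e 1" for e
    unfolding dim_gen_eigenspace_def kernel_dim_def by simp
  then have block_size: "k = 1" if "(k, e) \<in> set n_as" for k e
    using sum_list_min_2_eq_min_1[of "map fst [(k, e') \<leftarrow> n_as. e' = e]" k] that jnf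
    unfolding dim_gen_eigenspace[OF jnf] jordan_nf_def by force
  have "jordan_matrix n_as = mk_diagonal (map snd n_as)"
    unfolding jordan_matrix_def mk_diagonal_def map_map
  proof (intro arg_cong[of _ _ diag_block_mat] map_cong refl, goal_cases)
    case (1 ke)
    then obtain k e where "ke = (k, e)" "k = 1"
      using block_size by (metis surj_pair)
    then show ?case
      by (auto intro!: eq_matI simp: jordan_block_def)
  qed
  then show ?thesis
    using jnf mk_diagonal_diagonal unfolding diagonalizable_mat_def jordan_nf_def by metis
qed

lemma scaled_isometry_det_eq_1:
  assumes iso: "scaled_isometry m s K" and s: "s > 0" and "m > 0" and "det K = 1"
  shows "s = 1"
proof -
  have K: "K \<in> carrier_mat m m"
    using iso by (simp add: scaled_isometry_def)
  obtain D where D: "similar_mat K D" "diagonal_mat D"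
    using scaled_isometry_diagonalizable[OF iso s] unfolding diagonalizable_mat_def by auto
  have Dc: "D \<in> carrier_mat m m"
    using similar_matD[OF D(1)] K by auto
  have "\<forall>d \<in> set (diag_mat D). (cmod d)\<^sup>2 = s"
    using scaled_isometry_eigenvalue[OF iso] eigenvalue_similar[OF D(1)]
      eigenvalue_diagonal_mat[OF Dc D(2)] by blast
  moreover have "(cmod (prod_list ds))\<^sup>2 = s ^ length ds" if "\<forall>d \<in> set ds. (cmod d)\<^sup>2 = s" for ds
    using that by (induction ds) (auto simp: norm_mult power_mult_distrib)
  ultimately have "(cmod (prod_list (diag_mat D)))\<^sup>2 = s ^ length (diag_mat D)"
    by blast
  moreover have "prod_list (diag_mat D) = det K"
    using det_similar[OF D(1)] det_upper_triangular[OF _ Dc] D(2) Dc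
    unfolding upper_triangular_def diagonal_mat_def by auto
  ultimately have "s ^ m = 1"
    using Dc \<open>det K = 1\<close> by (simp add: diag_mat_def)
  then show ?thesis
    using power_eq_imp_eq_base[of s m 1] s \<open>m > 0\<close> by simp
qed

lemma elliptic_if_conj_scaled_isometry:
  assumes G: "G \<in> carrier_mat (n+1) (n+1)"
    and H: "H \<in> carrier_mat (n+1) (n+1)" and Hi: "Hi \<in> carrier_mat (n+1) (n+1)"
    and HHi: "H * Hi = 1\<^sub>m (n+1)" and HiH: "Hi * H = 1\<^sub>m (n+1)"
    and iso: "scaled_isometry (n+1) s (Hi * G * H)" and s: "s > 0"
  shows "elliptic n G"
  unfolding elliptic_def
proof (intro allI impI)
  fix L assume "SL_lift n G L"
  then obtain c where L: "L \<in> carrier_mat (n+1) (n+1)" "det L = 1" "c \<noteq> 0" "L = c \<cdot>\<^sub>m G"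
    unfolding SL_lift_def by auto
  define K where "K = c \<cdot>\<^sub>m (Hi * G * H)"
  have M: "Hi * G * H \<in> carrier_mat (n+1) (n+1)"
    using G H Hi by simp
  then have K: "K \<in> carrier_mat (n+1) (n+1)"
    by (simp add: K_def)
  have "H * K * Hi = c \<cdot>\<^sub>m (H * (Hi * G * H) * Hi)"
    unfolding K_def mult_smult_distrib[OF H M] mult_smult_assoc_mat[OF mult_carrier_mat[OF H M] Hi] ..
  also have "\<dots> = L"
    using mult_conj_cancel[OF H Hi G HHi] L(4) by simp
  finally have LK: "similar_mat L K"
    using L(1) K H Hi HHi HiH by (intro similar_matI[of L K H Hi "n+1"]) auto
  have isoK: "scaled_isometry (n+1) ((cmod c)\<^sup>2 * s) K"
    unfolding K_def by (rule scaled_isometry_smult[OF iso])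
  have pos: "(cmod c)\<^sup>2 * s > 0"
    using L(3) s by simp
  have "(cmod c)\<^sup>2 * s = 1"
    using scaled_isometry_det_eq_1[OF isoK pos] det_similar[OF LK] L(2) by simp
  then have "cmod k = 1" if "eigenvalue L k" for k
    using scaled_isometry_eigenvalue[OF isoK] eigenvalue_similar[OF LK] that
      power2_eq_iff_nonneg[of "cmod k" 1] by simp
  moreover have "diagonalizable_mat L"
    using scaled_isometry_diagonalizable[OF isoK pos] similar_mat_trans[OF LK]
    unfolding diagonalizable_mat_def by blast
  ultimately show "diagonalizable_mat L \<and> (\<forall>k. eigenvalue L k \<longrightarrow> cmod k = 1)"
    by blast
qed

section \<open>Matrices preserving every \<open>T(r)\<close>\<close>

lemma cmod_of_real_mult_add_sq:
  fixes a b :: complex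
  shows "(cmod (of_real t * a + b))\<^sup>2 =
    t\<^sup>2 * (cmod a)\<^sup>2 + 2 * t * (Re a * Re b + Im a * Im b) + (cmod b)\<^sup>2"
  unfolding cmod_power2 by (simp add: algebra_simps power2_eq_square)

lemma quartic_eq_0_on_pos:
  fixes a b c d e :: real
  assumes "\<And>t. t > 0 \<Longrightarrow> a * t^4 + b * t^3 + c * t\<^sup>2 + d * t + e = 0"
  shows "a = 0" and "e = 0"
proof -
  have "a + b + c + d + e = 0"
    and "16 * a + 8 * b + 4 * c + 2 * d + e = 0"
    and "81 * a + 27 * b + 9 * c + 3 * d + e = 0"
    and "256 * a + 64 * b + 16 * c + 4 * d + e = 0"
    and "625 * a + 125 * b + 25 * c + 5 * d + e = 0"
    using assms[of 1] assms[of 2] assms[of 3] assms[of 4] assms[of 5] by simp_all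
  then show "a = 0" and "e = 0"
    by linarith+
qed

locale Tsphere_invariant =
  fixes n :: nat and M :: "complex mat"
  assumes n_pos: "n \<ge> 1" and M: "M \<in> carrier_mat (n+1) (n+1)"
    and maps_Tsphere: "\<And>r. r > 0 \<Longrightarrow> proj_image M (Tsphere n r) \<subseteq> Tsphere n r"
begin

lemma affine_point_image:
  assumes w: "w \<in> carrier_vec (n+1)" "w $ n = 1" and pos: "sum_sq_norm n w > 0"
  shows "(M *\<^sub>v w) $ n \<noteq> 0"
    and "sum_sq_norm n (M *\<^sub>v w) = sum_sq_norm n w * (cmod ((M *\<^sub>v w) $ n))\<^sup>2"
proof -
  have "w \<noteq> 0\<^sub>v (n+1)"
    using w(2) by auto
  with w have "proj_point w \<in> Tsphere n (sum_sq_norm n w)"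
    by (simp add: proj_point_mem_Tsphere_iff)
  then have "proj_point (M *\<^sub>v w) \<in> proj_image M (Tsphere n (sum_sq_norm n w))"
    unfolding proj_image_def using M w \<open>w \<noteq> 0\<^sub>v (n+1)\<close> by auto
  then have "proj_point (M *\<^sub>v w) \<in> Tsphere n (sum_sq_norm n w)"
    using maps_Tsphere[OF pos] by blast
  then have Mw: "M *\<^sub>v w \<noteq> 0\<^sub>v (n+1)"
    and eq: "sum_sq_norm n (M *\<^sub>v w) = sum_sq_norm n w * (cmod ((M *\<^sub>v w) $ n))\<^sup>2"
    unfolding proj_point_mem_Tsphere_iff[OF mult_mat_vec_carrier[OF M w(1)]] by auto
  show "sum_sq_norm n (M *\<^sub>v w) = sum_sq_norm n w * (cmod ((M *\<^sub>v w) $ n))\<^sup>2"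
    by (rule eq)
  show "(M *\<^sub>v w) $ n \<noteq> 0"
  proof
    assume "(M *\<^sub>v w) $ n = 0"
    then have "sum_sq_norm (n+1) (M *\<^sub>v w) = 0"
      using eq by (simp add: sum_sq_norm_Suc)
    with Mw M w show False
      by (simp add: sum_sq_norm_eq_0_iff_zero_vec)
  qed
qed

text \<open>The affine chart condition for the test point \<open>t e\<^sub>k + e\<^sub>n\<close>.\<close>
lemma test_point_identity:
  assumes k: "k < n" and t: "t > 0"
  shows "(\<Sum>i<n. (cmod (of_real t * M $$ (i,k) + M $$ (i,n)))\<^sup>2) =
    t\<^sup>2 * (cmod (of_real t * M $$ (n,k) + M $$ (n,n)))\<^sup>2"
proof -
  define w where "w = vec (n+1) (\<lambda>i. if i = k then complex_of_real t else if i = n then 1 else 0)"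
  have w: "w \<in> carrier_vec (n+1)" "w $ n = 1"
    using k by (auto simp: w_def)
  have Mw: "(M *\<^sub>v w) $ i = of_real t * M $$ (i,k) + M $$ (i,n)" if "i < n+1" for i
  proof -
    have "(M *\<^sub>v w) $ i = (\<Sum>j<n+1. (if j = k then of_real t * M $$ (i,k) else 0)
        + (if j = n then M $$ (i,n) else 0))"
      unfolding index_mult_mat_vec_sum[OF M w(1) that] using k by (intro sum.cong) (auto simp: w_def)
    then show ?thesis
      using k by (simp add: sum.distrib)
  qed
  have "sum_sq_norm n w = (\<Sum>j<n. if j = k then t\<^sup>2 else 0)"
    unfolding sum_sq_norm_def using k by (intro sum.cong) (auto simp: w_def)
  then have "sum_sq_norm n w = t\<^sup>2"
    using k by simp
  moreover have "sum_sq_norm n (M *\<^sub>v w) = (\<Sum>i<n. (cmod (of_real t * M $$ (i,k) + M $$ (i,n)))\<^sup>2)"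
    unfolding sum_sq_norm_def by (intro sum.cong) (auto simp: Mw)
  ultimately show ?thesis
    using affine_point_image(2)[OF w] t Mw[of n] by simp
qed

lemma last_row_eq_0_and_last_col_eq_0:
  assumes k: "k < n"
  shows "M $$ (n,k) = 0" and "sum_sq_norm n (col M n) = 0"
proof -
  define A where "A = (\<Sum>i<n. (cmod (M $$ (i,k)))\<^sup>2)"
  define B where "B = (\<Sum>i<n. Re (M $$ (i,k)) * Re (M $$ (i,n)) + Im (M $$ (i,k)) * Im (M $$ (i,n)))"
  define C where "C = sum_sq_norm n (col M n)"
  define P where "P = (cmod (M $$ (n,k)))\<^sup>2"
  define Q where "Q = Re (M $$ (n,k)) * Re (M $$ (n,n)) + Im (M $$ (n,k)) * Im (M $$ (n,n))"
  define D where "D = (cmod (M $$ (n,n)))\<^sup>2"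
  have "P * t^4 + 2 * Q * t^3 + (D - A) * t\<^sup>2 + (- 2 * B) * t + (- C) = 0" if "t > 0" for t
  proof -
    have "C = (\<Sum>i<n. (cmod (M $$ (i,n)))\<^sup>2)"
      unfolding C_def sum_sq_norm_def using M by (intro sum.cong) auto
    then have "(\<Sum>i<n. (cmod (of_real t * M $$ (i,k) + M $$ (i,n)))\<^sup>2) = t\<^sup>2 * A + 2 * t * B + C"
      unfolding A_def B_def cmod_of_real_mult_add_sq
      by (simp add: sum.distrib flip: sum_distrib_left)
    moreover have "(cmod (of_real t * M $$ (n,k) + M $$ (n,n)))\<^sup>2 = t\<^sup>2 * P + 2 * t * Q + D"
      unfolding P_def Q_def D_def by (rule cmod_of_real_mult_add_sq)
    ultimately have "t\<^sup>2 * A + 2 * t * B + C = t\<^sup>2 * (t\<^sup>2 * P + 2 * t * Q + D)"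
      using test_point_identity[OF k that] by simp
    then show ?thesis
      by (simp add: algebra_simps power2_eq_square power3_eq_cube power4_eq_xxxx)
  qed
  from quartic_eq_0_on_pos[OF this]
  show "M $$ (n,k) = 0" and "sum_sq_norm n (col M n) = 0"
    unfolding P_def C_def by simp_all
qed

lemma last_row_eq_0: "k < n \<Longrightarrow> M $$ (n,k) = 0"
  by (rule last_row_eq_0_and_last_col_eq_0)

lemma last_col_eq_0: "i < n \<Longrightarrow> M $$ (i,n) = 0"
  using last_row_eq_0_and_last_col_eq_0(2)[of 0] n_pos M by (simp add: sum_sq_norm_eq_0_iff)

lemma index_mult_vec_last:
  assumes w: "w \<in> carrier_vec (n+1)"
  shows "(M *\<^sub>v w) $ n = M $$ (n,n) * w $ n"
proof -
  have "(M *\<^sub>v w) $ n = (\<Sum>j<n. M $$ (n,j) * w $ j) + M $$ (n,n) * w $ n"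
    using index_mult_mat_vec_sum[OF M w, of n] by simp
  then show ?thesis
    using last_row_eq_0 by simp
qed

lemma index_mult_vec_head:
  assumes w: "w \<in> carrier_vec (n+1)" and i: "i < n"
  shows "(M *\<^sub>v w) $ i = (\<Sum>j<n. M $$ (i,j) * w $ j)"
  using index_mult_mat_vec_sum[OF M w, of i] i last_col_eq_0[OF i] by simp

lemma corner_nonzero: "M $$ (n,n) \<noteq> 0"
proof -
  let ?w = "unit_vec (n+1) 0 + unit_vec (n+1) n :: complex vec"
  have w: "?w \<in> carrier_vec (n+1)" "?w $ n = 1"
    using n_pos by auto
  have "sum_sq_norm n ?w \<noteq> 0"
    using n_pos by (auto simp: sum_sq_norm_eq_0_iff)
  then have "sum_sq_norm n ?w > 0"
    using sum_sq_norm_nonneg[of n ?w] by linarith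
  then show ?thesis
    using affine_point_image(1)[OF w] index_mult_vec_last[OF w(1)] w(2) by simp
qed

lemma sum_sq_norm_head_mult_vec:
  assumes w: "w \<in> carrier_vec (n+1)"
  shows "sum_sq_norm n (M *\<^sub>v w) = (cmod (M $$ (n,n)))\<^sup>2 * sum_sq_norm n w"
proof (cases "sum_sq_norm n w = 0")
  case True
  then have "sum_sq_norm n (M *\<^sub>v w) = 0"
    using index_mult_vec_head[OF w] by (simp add: sum_sq_norm_eq_0_iff)
  with True show ?thesis
    by simp
next
  case False
  define w' where "w' = vec (n+1) (\<lambda>i. if i < n then w $ i else 1)"
  have w': "w' \<in> carrier_vec (n+1)" "w' $ n = 1"
    by (auto simp: w'_def)
  have head: "sum_sq_norm n w' = sum_sq_norm n w"
    unfolding sum_sq_norm_def by (intro sum.cong) (auto simp: w'_def)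
  have "(M *\<^sub>v w') $ i = (M *\<^sub>v w) $ i" if "i < n" for i
    unfolding index_mult_vec_head[OF w that] index_mult_vec_head[OF w'(1) that]
    by (intro sum.cong) (auto simp: w'_def)
  then have M_head: "sum_sq_norm n (M *\<^sub>v w') = sum_sq_norm n (M *\<^sub>v w)"
    unfolding sum_sq_norm_def by simp
  have "sum_sq_norm n w' > 0"
    using False sum_sq_norm_nonneg[of n w] head by linarith
  then show ?thesis
    using affine_point_image(2)[OF w'] index_mult_vec_last[OF w'(1)] w'(2) head M_head by simp
qed

lemma scaled_isometry: "scaled_isometry (n+1) ((cmod (M $$ (n,n)))\<^sup>2) M"
  unfolding scaled_isometry_def
  using M sum_sq_norm_head_mult_vec index_mult_vec_last
  by (simp add: sum_sq_norm_Suc norm_mult power_mult_distrib algebra_simps)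

end

theorem mainTheorem3:
  fixes n :: nat and G :: "complex mat"
  assumes "n \<ge> 1" and "G \<in> carrier_mat (n+1) (n+1)" and "det G \<noteq> 0"
  shows "elliptic n G \<longleftrightarrow>
    (\<exists>H Hi. H \<in> carrier_mat (n+1) (n+1) \<and> Hi \<in> carrier_mat (n+1) (n+1) \<and>
       H * Hi = 1\<^sub>m (n+1) \<and> Hi * H = 1\<^sub>m (n+1) \<and>
       (\<forall>r::real. r > 0 \<longrightarrow> proj_image (Hi * G * H) (Tsphere n r) = Tsphere n r))"
proof
  assume "elliptic n G"
  then show "\<exists>H Hi. H \<in> carrier_mat (n+1) (n+1) \<and> Hi \<in> carrier_mat (n+1) (n+1) \<and>
      H * Hi = 1\<^sub>m (n+1) \<and> Hi * H = 1\<^sub>m (n+1) \<and>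
      (\<forall>r::real. r > 0 \<longrightarrow> proj_image (Hi * G * H) (Tsphere n r) = Tsphere n r)"
    using elliptic_imp_conj_preserves_Tsphere[OF assms(2,3)] by blast
next
  assume "\<exists>H Hi. H \<in> carrier_mat (n+1) (n+1) \<and> Hi \<in> carrier_mat (n+1) (n+1) \<and>
      H * Hi = 1\<^sub>m (n+1) \<and> Hi * H = 1\<^sub>m (n+1) \<and>
      (\<forall>r::real. r > 0 \<longrightarrow> proj_image (Hi * G * H) (Tsphere n r) = Tsphere n r)"
  then obtain H Hi where H: "H \<in> carrier_mat (n+1) (n+1)" and Hi: "Hi \<in> carrier_mat (n+1) (n+1)"
    and inv: "H * Hi = 1\<^sub>m (n+1)" "Hi * H = 1\<^sub>m (n+1)"
    and preserves: "\<forall>r::real. r > 0 \<longrightarrow> proj_image (Hi * G * H) (Tsphere n r) = Tsphere n r"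
    by blast
  interpret Tsphere_invariant n "Hi * G * H"
    using assms(1,2) H Hi preserves by unfold_locales auto
  show "elliptic n G"
    using elliptic_if_conj_scaled_isometry[OF assms(2) H Hi inv scaled_isometry] corner_nonzero
    by simp
qed

end
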